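(* Let $\alpha,\beta>0$, $\mu>0$, $\lambda_1,\lambda_2\ge 0$ with $\lambda_1>\lambda_2$, and fix a real $\omega>0$. Let $$\Delta(s,\omega)=\det(Q+sR-\omega I)=(\lambda_1-\mu)(\lambda_2-\mu)s^2-\big[(\lambda_1-\mu)(\omega+\beta)+(\lambda_2-\mu)(\omega+\alpha)\big]s+\omega(\omega+\alpha+\beta),$$ and, when $(\lambda_1-\mu)(\lambda_2-\mu)\neq 0$, let $$s_{1,2}(\omega)=\frac{b\pm\sqrt{b^2-4\omega(\omega+\alpha+\beta)(\lambda_1-\mu)(\lambda_2-\mu)}}{2(\lambda_1-\mu)(\lambda_2-\mu)},\qquad b=(\lambda_1-\mu)(\omega+\beta)+(\lambda_2-\mu)(\omega+\alpha),$$ with $+$ for $s_1$ and $-$ for $s_2$. Then: 1. If $\lambda_2>\mu$ (hence $\lambda_1>\mu$), no starvation occurs (for every initial buffer level $x>0$, $X(t)>0$ for all $t\ge 0$). 2. If $\lambda_2<\mu<\lambda_1$, then $\mathrm{Re}(s_2(\omega))>0$ and $\mathrm{Re}(s_1(\omega))<0$. 3. If $\lambda_2<\mu$ and $\lambda_1<\mu$, then $\mathrm{Re}(s_1(\omega))<0$ and $\mathrm{Re}(s_2(\omega))<0$. 4. If $\lambda_2=\mu$ (hence $\lambda_1>\mu$), no starvation occurs. 5. If $\lambda_1=\mu$ (hence $\lambda_2<\mu$), then $\Delta(\cdot,\omega)$ has the single root $s(\omega)=\dfrac{\omega(\omega+\alpha+\beta)}{(\lambda_2-\mu)(\omega+\alpha)}$,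 and $\mathrm{Re}(s(\omega))<0$.
   Context: Two-state Markov modulated fluid model of a playout buffer: $\{I(t),t\ge0\}$ is a continuous-time Markov chain on $\{1,2\}$ with generator $Q=\begin{pmatrix}-\beta&\beta\\ \alpha&-\alpha\end{pmatrix}$, and the rate matrix is $R=\mathrm{diag}(\lambda_2-\mu,\ \lambda_1-\mu)$, i.e. frames arrive at rate $\lambda_2$ in state 1 and $\lambda_1$ in state 2 and are played at constant rate $\mu$. The buffer content $X(t)\ge 0$ evolves as $\frac{d}{dt}X(t)=R_{I(t)I(t)}$, starting from $X(0)=x>0$. Starvation means that the buffer empties, i.e. $\tau=\inf\{t>0:X(t)=0\}<\infty$. The variable $\omega$ is the Laplace transform variable for the starvation time $\tau$; $I$ denotes the $2\times 2$ identity matrix. *)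

theory Defs
  imports "HOL-Analysis.Analysis"
begin

text \<open>Net rate of change of the buffer in environment state i:
  state 1: arrivals at rate lambda2, state 2: arrivals at rate lambda1; playout at rate mu.
  (Diagonal entries of R = diag(lambda2 - mu, lambda1 - mu).)\<close>
definition fluid_rate :: "real \<Rightarrow> real \<Rightarrow> real \<Rightarrow> nat \<Rightarrow> real" where
  "fluid_rate l1 l2 mu i = (if i = 1 then l2 - mu else l1 - mu)"

text \<open>Sample-path description of the fluid model: the environment path I takes values in
  {1,2}; the buffer content X is continuous, starts at x, and (off a countable set of
  switching times) has derivative R_{I(t)I(t)}.\<close>
definition fluid_path ::
  "real \<Rightarrow> real \<Rightarrow> real \<Rightarrow> real \<Rightarrow> (real \<Rightarrow> nat) \<Rightarrow> (real \<Rightarrow> real) \<Rightarrow> bool" where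
  "fluid_path l1 l2 mu x I X \<longleftrightarrow>
     X 0 = x \<and> continuous_on {0..} X \<and> (\<forall>t\<ge>0. I t \<in> {1, 2}) \<and>
     (\<exists>C. countable C \<and>
        (\<forall>t\<in>{0<..} - C. (X has_real_derivative fluid_rate l1 l2 mu (I t)) (at t)))"

definition starvation :: "(real \<Rightarrow> real) \<Rightarrow> bool" where
  "starvation X \<longleftrightarrow> (\<exists>t>0. X t = 0)"

definition Delta :: "real \<Rightarrow> real \<Rightarrow> real \<Rightarrow> real \<Rightarrow> real \<Rightarrow> real \<Rightarrow> complex \<Rightarrow> complex" where
  "Delta alpha beta mu l1 l2 w s =
     of_real ((l1 - mu) * (l2 - mu)) * s ^ 2
     - of_real ((l1 - mu) * (w + beta) + (l2 - mu) * (w + alpha)) * s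
     + of_real (w * (w + alpha + beta))"

definition bcoef :: "real \<Rightarrow> real \<Rightarrow> real \<Rightarrow> real \<Rightarrow> real \<Rightarrow> real \<Rightarrow> real" where
  "bcoef alpha beta mu l1 l2 w = (l1 - mu) * (w + beta) + (l2 - mu) * (w + alpha)"

definition discr :: "real \<Rightarrow> real \<Rightarrow> real \<Rightarrow> real \<Rightarrow> real \<Rightarrow> real \<Rightarrow> real" where
  "discr alpha beta mu l1 l2 w =
     (bcoef alpha beta mu l1 l2 w)^2 - 4 * w * (w + alpha + beta) * (l1 - mu) * (l2 - mu)"

definition s1 :: "real \<Rightarrow> real \<Rightarrow> real \<Rightarrow> real \<Rightarrow> real \<Rightarrow> real \<Rightarrow> complex" where
  "s1 alpha beta mu l1 l2 w =
     (of_real (bcoef alpha beta mu l1 l2 w) + csqrt (of_real (discr alpha beta mu l1 l2 w)))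
     / of_real (2 * (l1 - mu) * (l2 - mu))"

definition s2 :: "real \<Rightarrow> real \<Rightarrow> real \<Rightarrow> real \<Rightarrow> real \<Rightarrow> real \<Rightarrow> complex" where
  "s2 alpha beta mu l1 l2 w =
     (of_real (bcoef alpha beta mu l1 l2 w) - csqrt (of_real (discr alpha beta mu l1 l2 w)))
     / of_real (2 * (l1 - mu) * (l2 - mu))"

end

theory Submission
  imports Defs
begin

text \<open>If both arrival rates are at least the playout rate, the buffer content is a continuous
  function whose derivative is nonnegative off a countable set, hence nondecreasing, so it never
  drops below its initial level. The statements about the roots of \<open>\<Delta>(\<cdot>, \<omega>)\<close> only
  use that the constant coefficient \<open>\<omega>(\<omega> + \<alpha> + \<beta>)\<close> is positive: the discriminant is
  \<open>b\<^sup>2 - 4\<omega>(\<omega> + \<alpha> + \<beta>)(\<lambda>\<^sub>1 - \<mu>)(\<lambda>\<^sub>2 - \<mu>)\<close>, so it exceeds \<open>b\<^sup>2\<close> exactly when the leading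
  coefficient is negative, which gives roots of opposite signs; when the leading coefficient is
  positive, \<open>b < 0\<close> and the square root of the discriminant is too small to change the sign of
  \<open>b\<close>. For \<open>\<lambda>\<^sub>1 = \<mu>\<close> the determinant is linear in \<open>s\<close>.\<close>

lemma DERIV_pos_imp_increasing_countable:
  fixes g :: "real \<Rightarrow> real"
  assumes ab: "a \<le> b" and cont: "continuous_on {a..b} g" and C: "countable C"
    and der: "\<And>t. t \<in> {a<..<b} - C \<Longrightarrow> \<exists>l>0. (g has_real_derivative l) (at t)"
  shows "g a \<le> g b"
proof (rule ccontr)
  assume "\<not> g a \<le> g b"
  then have "uncountable {g b<..<g a}" by (simp add: uncountable_open_interval)
  moreover have "countable (g ` C)" using C by simp
  ultimately obtain y where y: "y \<in> {g b<..<g a}" "y \<notin> g ` C"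
    by (metis countable_subset subsetI)
  \<comment> \<open>The last time \<open>t\<^sub>0\<close> at which \<open>g \<ge> y\<close> has \<open>g t\<^sub>0 = y\<close>, so \<open>t\<^sub>0 \<notin> C\<close>; a positive
    derivative there pushes \<open>g\<close> above \<open>y\<close> slightly later.\<close>
  define T where "T = {t \<in> {a..b}. y \<le> g t}"
  have "closed T" unfolding T_def
    by (rule continuous_on_closed_Collect_le) (auto intro: cont continuous_intros)
  moreover have "a \<in> T" using y ab unfolding T_def by auto
  moreover have bdd: "bdd_above T" unfolding T_def by (auto intro!: bdd_aboveI[of _ b])
  ultimately have t0T: "Sup T \<in> T" using closed_contains_Sup by blast
  define t0 where "t0 = Sup T"
  have ub: "t \<le> t0" if "t \<in> T" for t unfolding t0_def using bdd that by (simp add: cSup_upper)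
  have t0ab: "a \<le> t0" "t0 \<le> b" and "y \<le> g t0" using t0T unfolding T_def t0_def by auto
  moreover have "continuous_on {t0..b} g" using cont t0ab by (auto elim: continuous_on_subset)
  ultimately obtain t1 where t1: "t0 \<le> t1" "t1 \<le> b" "g t1 = y"
    using IVT2'[of g b y t0] y by auto
  then have "t1 \<in> T" using t0ab unfolding T_def by auto
  with t1 have gt0: "g t0 = y" using ub by force
  then have "t0 \<in> {a<..<b} - C" using y t0ab by force
  then obtain l where "l > 0" "(g has_real_derivative l) (at t0)" using der by blast
  then obtain d where d: "d > 0" "\<And>h. h > 0 \<Longrightarrow> h < d \<Longrightarrow> g t0 < g (t0 + h)"
    using DERIV_pos_inc_right by blast
  define h where "h = min d (b - t0) / 2"
  have h: "h > 0" "h < d" "t0 + h \<le> b"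
    using d \<open>t0 \<in> {a<..<b} - C\<close> unfolding h_def by (auto simp: min_def field_simps)
  then have "t0 + h \<in> T" using d(2)[OF h(1,2)] gt0 t0ab unfolding T_def by auto
  then show False using ub h by fastforce
qed

lemma DERIV_nonneg_imp_increasing_countable:
  fixes f :: "real \<Rightarrow> real"
  assumes ab: "a \<le> b" and cont: "continuous_on {a..b} f" and C: "countable C"
    and der: "\<And>t. t \<in> {a<..<b} - C \<Longrightarrow> \<exists>l\<ge>0. (f has_real_derivative l) (at t)"
  shows "f a \<le> f b"
proof (cases "a = b")
  case False
  then have ba: "b - a > 0" using ab by simp
  show ?thesis
  proof (rule field_le_epsilon)
    fix e :: real assume "e > 0"
    \<comment> \<open>Tilting \<open>f\<close> by the slope \<open>e / (b - a)\<close> makes its derivative positive.\<close>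
    define k where "k = e / (b - a)"
    have k: "k > 0" "k * (b - a) = e" using \<open>e > 0\<close> ba unfolding k_def by auto
    have "f a + k * a \<le> f b + k * b"
    proof (rule DERIV_pos_imp_increasing_countable[OF ab _ C, of "\<lambda>t. f t + k * t"])
      show "continuous_on {a..b} (\<lambda>t. f t + k * t)" using cont by (intro continuous_intros)
      fix t assume "t \<in> {a<..<b} - C"
      then obtain l where "l \<ge> 0" "(f has_real_derivative l) (at t)" using der by blast
      then show "\<exists>l>0. ((\<lambda>t. f t + k * t) has_real_derivative l) (at t)" using k
        by (intro exI[of _ "l + k"]) (auto intro!: derivative_eq_intros)
    qed
    then show "f a \<le> f b + e" using k by (simp add: algebra_simps)
  qed
qed simp

lemma fluid_path_ge_initial:
  assumes "l1 \<ge> mu" and "l2 \<ge> mu" and "fluid_path l1 l2 mu x I X" and "t \<ge> 0"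
  shows "x \<le> X t"
proof -
  obtain C where X0: "X 0 = x" and cont: "continuous_on {0..} X" and C: "countable C"
    and der: "\<forall>t\<in>{0<..} - C. (X has_real_derivative fluid_rate l1 l2 mu (I t)) (at t)"
    using assms(3) unfolding fluid_path_def by blast
  have "X 0 \<le> X t"
  proof (rule DERIV_nonneg_imp_increasing_countable[OF \<open>t \<ge> 0\<close> _ C])
    show "continuous_on {0..t} X" using cont by (rule continuous_on_subset) auto
    fix s assume "s \<in> {0<..<t} - C"
    moreover have "fluid_rate l1 l2 mu (I s) \<ge> 0"
      using assms(1,2) unfolding fluid_rate_def by auto
    ultimately show "\<exists>l\<ge>0. (X has_real_derivative l) (at s)" using der by auto
  qed
  then show ?thesis using X0 by simp
qed

lemma fluid_path_no_starvation:
  assumes "l1 \<ge> mu" and "l2 \<ge> mu" and "x > 0" and "fluid_path l1 l2 mu x I X"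
  shows "\<not> starvation X \<and> (\<forall>t\<ge>0. X t > 0)"
proof -
  have pos: "\<forall>t\<ge>0. X t > 0"
    using fluid_path_ge_initial[OF assms(1,2,4)] \<open>x > 0\<close> by (meson less_le_trans)
  then show ?thesis unfolding starvation_def by (metis less_imp_le less_irrefl)
qed

lemma Re_csqrt_of_real: "Re (csqrt (of_real x)) = (if x \<ge> 0 then sqrt x else 0)"
  by (simp add: csqrt_of_real')

lemma Re_csqrt_of_real_gt_abs:
  assumes "x > y\<^sup>2"
  shows "Re (csqrt (of_real x)) > \<bar>y\<bar>"
proof -
  have "x \<ge> 0" using assms zero_le_power2[of y] by linarith
  moreover have "sqrt x > sqrt (y\<^sup>2)" using assms by (rule real_sqrt_less_mono)
  ultimately show ?thesis by (simp add: Re_csqrt_of_real)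
qed

lemma Re_csqrt_of_real_lt_abs:
  assumes "x < y\<^sup>2" and "y \<noteq> 0"
  shows "Re (csqrt (of_real x)) < \<bar>y\<bar>"
proof (cases "x \<ge> 0")
  case True
  have "sqrt x < sqrt (y\<^sup>2)" using assms(1) by (rule real_sqrt_less_mono)
  then show ?thesis using True by (simp add: Re_csqrt_of_real)
qed (use assms(2) in \<open>simp add: Re_csqrt_of_real\<close>)

lemma discr_eq:
  "discr alpha beta mu l1 l2 w =
     (bcoef alpha beta mu l1 l2 w)\<^sup>2 - 4 * (w * (w + alpha + beta)) * ((l1 - mu) * (l2 - mu))"
  unfolding discr_def by (simp add: algebra_simps)

lemma Re_s1:
  "Re (s1 alpha beta mu l1 l2 w) =
     (bcoef alpha beta mu l1 l2 w + Re (csqrt (of_real (discr alpha beta mu l1 l2 w))))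
     / (2 * ((l1 - mu) * (l2 - mu)))"
  unfolding s1_def by (simp add: mult.assoc)

lemma Re_s2:
  "Re (s2 alpha beta mu l1 l2 w) =
     (bcoef alpha beta mu l1 l2 w - Re (csqrt (of_real (discr alpha beta mu l1 l2 w))))
     / (2 * ((l1 - mu) * (l2 - mu)))"
  unfolding s2_def by (simp add: mult.assoc)

lemma Re_roots_opposite_signs:
  assumes "alpha > 0" "beta > 0" "w > 0" and "(l1 - mu) * (l2 - mu) < 0"
  shows "Re (s2 alpha beta mu l1 l2 w) > 0 \<and> Re (s1 alpha beta mu l1 l2 w) < 0"
proof -
  define B where "B = bcoef alpha beta mu l1 l2 w"
  define r where "r = Re (csqrt (of_real (discr alpha beta mu l1 l2 w)))"
  have "4 * (w * (w + alpha + beta)) * ((l1 - mu) * (l2 - mu)) < 0"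
    using assms by (simp add: mult_pos_neg)
  then have "r > \<bar>B\<bar>" unfolding r_def B_def
    by (intro Re_csqrt_of_real_gt_abs) (simp add: discr_eq)
  then have "B - r < 0" "B + r > 0" by linarith+
  then show ?thesis using assms(4) unfolding Re_s1 Re_s2 B_def[symmetric] r_def[symmetric]
    by (simp add: divide_neg_neg divide_pos_neg)
qed

lemma Re_roots_negative:
  assumes "alpha > 0" "beta > 0" "w > 0" and "l1 < mu" "l2 < mu"
  shows "Re (s1 alpha beta mu l1 l2 w) < 0 \<and> Re (s2 alpha beta mu l1 l2 w) < 0"
proof -
  define B where "B = bcoef alpha beta mu l1 l2 w"
  define r where "r = Re (csqrt (of_real (discr alpha beta mu l1 l2 w)))"
  have A: "(l1 - mu) * (l2 - mu) > 0" using assms by (simp add: mult_neg_neg)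
  have B: "B < 0" unfolding B_def bcoef_def using assms by (intro add_neg_neg mult_neg_pos) auto
  have "4 * (w * (w + alpha + beta)) * ((l1 - mu) * (l2 - mu)) > 0" using assms A by simp
  then have "r < \<bar>B\<bar>" unfolding r_def using B unfolding B_def
    by (intro Re_csqrt_of_real_lt_abs) (auto simp: discr_eq)
  moreover have "r \<ge> 0" unfolding r_def by (simp add: Re_csqrt_of_real)
  ultimately have "B + r < 0" "B - r < 0" using B by linarith+
  then show ?thesis using A unfolding Re_s1 Re_s2 B_def[symmetric] r_def[symmetric]
    by (simp add: divide_neg_pos)
qed

lemma Delta_l1_eq_mu:
  "Delta alpha beta mu mu l2 w s =
     of_real (w * (w + alpha + beta)) - of_real ((l2 - mu) * (w + alpha)) * s"
  unfolding Delta_def by (simp add: algebra_simps)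

lemma linear_root_iff:
  fixes c k :: real and s :: complex
  assumes "k \<noteq> 0"
  shows "of_real c - of_real k * s = 0 \<longleftrightarrow> s = of_real (c / k)"
  using assms by (auto simp: field_simps)

lemma Delta_unique_root_l1_eq_mu:
  assumes "alpha > 0" "beta > 0" "w > 0" and "l2 < mu"
  shows "let s0 = complex_of_real (w * (w + alpha + beta) / ((l2 - mu) * (w + alpha)))
         in (\<forall>s. Delta alpha beta mu mu l2 w s = 0 \<longleftrightarrow> s = s0) \<and> Re s0 < 0"
proof -
  have k: "(l2 - mu) * (w + alpha) < 0" using assms by (simp add: mult_neg_pos)
  moreover have "w * (w + alpha + beta) > 0" using assms by simp
  ultimately show ?thesis unfolding Let_def Delta_l1_eq_mu linear_root_iff[OF less_imp_neq[OF k]]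
    by (simp add: divide_pos_neg del: of_real_mult of_real_add of_real_diff)
qed

theorem proposition1:
  fixes alpha beta mu l1 l2 w :: real
  assumes "alpha > 0" and "beta > 0" and "mu > 0"
    and "l1 \<ge> 0" and "l2 \<ge> 0" and "l1 > l2" and "w > 0"
  shows
    "(l2 > mu \<longrightarrow>
        (\<forall>x>0. \<forall>I X. fluid_path l1 l2 mu x I X \<longrightarrow>
            \<not> starvation X \<and> (\<forall>t\<ge>0. X t > 0)))
   \<and> (l2 < mu \<and> mu < l1 \<longrightarrow>
        Re (s2 alpha beta mu l1 l2 w) > 0 \<and> Re (s1 alpha beta mu l1 l2 w) < 0)
   \<and> (l2 < mu \<and> l1 < mu \<longrightarrow>
        Re (s1 alpha beta mu l1 l2 w) < 0 \<and> Re (s2 alpha beta mu l1 l2 w) < 0)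
   \<and> (l2 = mu \<longrightarrow>
        (\<forall>x>0. \<forall>I X. fluid_path l1 l2 mu x I X \<longrightarrow>
            \<not> starvation X \<and> (\<forall>t\<ge>0. X t > 0)))
   \<and> (l1 = mu \<longrightarrow>
        (let s0 = complex_of_real (w * (w + alpha + beta) / ((l2 - mu) * (w + alpha)))
         in (\<forall>s. Delta alpha beta mu l1 l2 w s = 0 \<longleftrightarrow> s = s0) \<and> Re s0 < 0))"
proof -
  have no_starvation: "\<forall>x>0. \<forall>I X. fluid_path l1 l2 mu x I X \<longrightarrow>
      \<not> starvation X \<and> (\<forall>t\<ge>0. X t > 0)" if "l2 \<ge> mu"
    using fluid_path_no_starvation[of mu l1 l2] that \<open>l1 > l2\<close> by auto
  have "mu < l1 \<Longrightarrow> l2 < mu \<Longrightarrow> (l1 - mu) * (l2 - mu) < 0"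
    by (simp add: mult_pos_neg)
  then show ?thesis
    using no_starvation Re_roots_opposite_signs[OF assms(1,2,7)]
      Re_roots_negative[OF assms(1,2,7)] Delta_unique_root_l1_eq_mu[OF assms(1,2,7)] \<open>l1 > l2\<close>
    by auto
qed

end
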